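(* Let $d,b,n$ be positive integers and $R_0(t)=\prod_{-n\le l\le n}(t-dl)$. For a polynomial $q$ put $p(t)=q(t)/R_0(t)$ and $p_k=(p(t)(t-dk))|_{t=dk}$ for $-n\le k\le n$. Then in each of the following cases $\deg q\le 2n$, every $p_k$ is an integer, and $|p_k|\le C$: (i) $q(t)=d^{2n}\prod_{(d+2(i-1))n<l\le(d+2i)n}(t-l)$ with $1\le i\le b$, and $C=\frac{1}{(n!)^2}\prod_{(2d+2(i-1))n<l\le(2d+2i)n}l$; (ii) $q(t)=d^{2n}\prod_{(d+2(i-1))n<l\le(d+2i)n}(t+l)$ with $1\le i\le b$, and the same $C$ as in (i); (iii) $q(t)=d^{2n}(2n)!$ and $C=\frac{(2n)!}{(n!)^2}$.
   Context: All products are over integers $l$ in the indicated ranges. *)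

theory Defs
  imports "HOL-Computational_Algebra.Polynomial"
begin

definition R0 :: "nat \<Rightarrow> nat \<Rightarrow> real poly" where
  "R0 d n = (\<Prod>l\<in>{-int n..int n}. [:- (of_nat d * of_int l), 1:])"

text \<open>Since R_0 has the simple
  factor (t - d k), p(t)(t - d k) = q(t) / (R_0(t) / (t - d k)) as rational functions,
  with R_0(t)/(t - d k) an exact polynomial quotient; we evaluate this at t = d k.\<close>
definition pk :: "nat \<Rightarrow> nat \<Rightarrow> real poly \<Rightarrow> int \<Rightarrow> real" where
  "pk d n q k = poly q (of_nat d * of_int k)
      / poly (R0 d n div [:- (of_nat d * of_int k), 1:]) (of_nat d * of_int k)"

end

theory Submission
  imports Defs
begin

(* Let Delta(k) = prod_{l <> k} (k - l) over -n <= l <= n.  Evaluating the exact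
   quotient R_0(t)/(t - d k) at t = d k gives d^(2n) Delta(k), so
   p_k = q(d k) / (d^(2n) Delta(k)), and |Delta(k)| = (n+k)! (n-k)!.  Hence, if
   q(d k) = d^(2n) P for an integer P divisible by (2n)! with |P| <= B, then p_k is
   an integer (as (n+k)!(n-k)! divides (2n)!) and |p_k| <= B/(n!)^2 (as
   (n!)^2 <= (n+k)!(n-k)!, the central binomial coefficient being the largest).
   In cases (i) and (ii), P is a product of 2n consecutive integers l + m,
   a < l <= a + 2n, with |m| = |d k| <= d n <= a: a Pochhammer symbol, hence
   divisible by (2n)!, whose factors are positive and dominated by those of the
   block shifted by d n (shifted_consecutive_product).  In case (iii), P = (2n)!. *)

lemma prod_Ioc_int_shift:
  fixes x :: int
  shows "(\<Prod>l\<in>{x<..x+int N}. f l) = (\<Prod>i<N. f (x+1+int i))"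
proof (induction N)
  case 0 then show ?case by simp
next
  case (Suc N)
  have "{x<..x+int (Suc N)} = insert (x+1+int N) {x<..x+int N}" by auto
  then show ?case using Suc by (simp add: lessThan_Suc mult.commute)
qed

lemma prod_Ioc_int_translate:
  fixes x m :: int
  shows "(\<Prod>l\<in>{x<..x+int N}. f (l + m)) = (\<Prod>l\<in>{x+m<..x+m+int N}. f l)"
  by (simp only: prod_Ioc_int_shift[where x=x] prod_Ioc_int_shift[where x="x+m"]) (simp add: algebra_simps)

(* N consecutive integers: their product is a Pochhammer symbol, divisible by N!. *)
lemma fact_dvd_prod_Ioc_int: "(fact N :: int) dvd (\<Prod>l\<in>{x<..x+int N}. l)"
proof -
  have "(\<Prod>l\<in>{x<..x+int N}. l) = pochhammer (x+1) N"
    by (simp add: prod_Ioc_int_shift pochhammer_prod atLeast0LessThan)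
  then show ?thesis using fact_dvd_pochhammer by simp
qed

lemma prod_Ioc_int_mono:
  fixes y z :: int
  assumes "0 \<le> y" "y \<le> z"
  shows "(\<Prod>l\<in>{y<..y+int N}. l) \<le> (\<Prod>l\<in>{z<..z+int N}. l)"
  unfolding prod_Ioc_int_shift by (rule prod_mono) (use assms in auto)

lemma shifted_consecutive_product:
  fixes a m D :: int and N :: nat
  assumes "\<bar>m\<bar> \<le> D" "D \<le> a"
  shows "fact N dvd (\<Prod>l\<in>{a<..a+int N}. l + m)"
    and "\<bar>\<Prod>l\<in>{a<..a+int N}. l + m\<bar> \<le> (\<Prod>l\<in>{a+D<..a+D+int N}. l)"
proof -
  have translate: "(\<Prod>l\<in>{a<..a+int N}. l + m) = (\<Prod>l\<in>{a+m<..a+m+int N}. l)"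
    using prod_Ioc_int_translate[of "\<lambda>l. l"] .
  then show "fact N dvd (\<Prod>l\<in>{a<..a+int N}. l + m)"
    using fact_dvd_prod_Ioc_int by simp
  have start: "0 \<le> a + m" "a + m \<le> a + D" using assms by linarith+
  then have "0 \<le> (\<Prod>l\<in>{a+m<..a+m+int N}. l)" by (intro prod_nonneg) auto
  then show "\<bar>\<Prod>l\<in>{a<..a+int N}. l + m\<bar> \<le> (\<Prod>l\<in>{a+D<..a+D+int N}. l)"
    using prod_Ioc_int_mono[OF start] translate by simp
qed

lemma abs_prod_node_differences:
  fixes n :: nat and k :: int
  assumes "k \<in> {-int n..int n}"
  shows "\<bar>\<Prod>l\<in>{-int n..int n}-{k}. k - l\<bar> = fact (nat (int n+k)) * fact (nat (int n-k))"
proof -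
  define L R where "L = nat (int n+k)" and "R = nat (int n-k)"
  let ?left = "{-int n-1<..-int n-1+int L}" and ?right = "{k<..k+int R}"
  have split: "{-int n..int n}-{k} = ?left \<union> ?right" "?left \<inter> ?right = {}"
    using assms by (auto simp: L_def R_def)
  have "(\<Prod>l\<in>?left. \<bar>k - l\<bar>) = (\<Prod>i<L. int (L - i))"
    by (subst prod_Ioc_int_shift, rule prod.cong) (use assms in \<open>auto simp: L_def\<close>)
  also have "\<dots> = fact L" by (simp add: fact_prod_rev atLeast0LessThan)
  finally have left: "(\<Prod>l\<in>?left. \<bar>k - l\<bar>) = fact L" .
  have "(\<Prod>l\<in>?right. \<bar>k - l\<bar>) = (\<Prod>i<R. int (Suc i))"
    by (subst prod_Ioc_int_shift, rule prod.cong) auto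
  also have "\<dots> = fact R" by (simp add: fact_prod_Suc atLeast0LessThan)
  finally have right: "(\<Prod>l\<in>?right. \<bar>k - l\<bar>) = fact R" .
  have "\<bar>\<Prod>l\<in>{-int n..int n}-{k}. k - l\<bar> = (\<Prod>l\<in>?left \<union> ?right. \<bar>k - l\<bar>)"
    unfolding split(1) by (simp add: abs_prod)
  also have "\<dots> = (\<Prod>l\<in>?left. \<bar>k - l\<bar>) * (\<Prod>l\<in>?right. \<bar>k - l\<bar>)"
    by (rule prod.union_disjoint) (use split(2) in auto)
  also have "\<dots> = fact L * fact R" by (simp only: left right)
  finally show ?thesis by (simp only: L_def R_def)
qed

(* Equivalent to the maximality of the central binomial coefficient. *)
lemma fact_square_le_fact_mult:
  fixes a b n :: nat
  assumes "a + b = 2*n"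
  shows "fact n ^ 2 \<le> (fact a * fact b :: nat)"
proof -
  have "a \<le> 2*n" "b = 2*n - a" using assms by linarith+
  then have "fact a * fact b * (2*n choose a) = (fact (2*n) :: nat)"
    using binomial_fact_lemma by blast
  also have "\<dots> = fact n * fact n * (2*n choose n)"
    using binomial_fact_lemma[of n "2*n"] by (simp add: mult_2)
  finally have eq: "fact a * fact b * (2*n choose a) = fact n * fact n * (2*n choose n)" .
  have "0 < 2*n choose a" using \<open>a \<le> 2*n\<close> by simp
  moreover have "fact n * fact n * (2*n choose a) \<le> fact n * fact n * (2*n choose n)"
    using binomial_maximum' by simp
  ultimately show ?thesis unfolding eq[symmetric] power2_eq_square
    by (metis mult_le_cancel2)
qed

lemma poly_R0_quotient:
  fixes n d :: nat and k :: int
  assumes "k \<in> {-int n..int n}"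
  shows "poly (R0 d n div [:- (of_nat d * of_int k), 1:]) (of_nat d * of_int k)
       = real d ^ (2*n) * of_int (\<Prod>l\<in>{-int n..int n}-{k}. k - l)"
proof -
  let ?S = "{-int n..int n}" and ?f = "\<lambda>l. [:- (of_nat d * of_int l), 1:] :: real poly"
  have "R0 d n = ?f k * prod ?f (?S - {k})"
    unfolding R0_def using assms by (simp add: prod.remove)
  then have "R0 d n div ?f k = prod ?f (?S - {k})"
    by (metis nonzero_mult_div_cancel_left pCons_eq_0_iff one_neq_zero)
  then have "poly (R0 d n div ?f k) (of_nat d * of_int k) = (\<Prod>l\<in>?S-{k}. real d * of_int (k - l))"
    by (simp add: poly_prod algebra_simps)
  also have "\<dots> = real d ^ card (?S-{k}) * of_int (\<Prod>l\<in>?S-{k}. k - l)"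
    by (simp add: prod.distrib)
  also have "card (?S-{k}) = 2*n" using assms by (simp add: card_Diff_singleton)
  finally show ?thesis .
qed

lemma pk_integral_bound:
  fixes d n :: nat and k P B :: int
  assumes "d > 0" "k \<in> {-int n..int n}"
    and at_node: "poly q (of_nat d * of_int k) = real d ^ (2*n) * of_int P"
    and divisible: "fact (2*n) dvd P" and bound: "\<bar>P\<bar> \<le> B"
  shows "pk d n q k \<in> \<int> \<and> \<bar>pk d n q k\<bar> \<le> of_int B / (fact n)^2"
proof
  define \<Delta> where "\<Delta> = (\<Prod>l\<in>{-int n..int n}-{k}. k - l)"
  define F :: nat where "F = fact (nat (int n+k)) * fact (nat (int n-k))"
  have pk_eq: "pk d n q k = of_int P / of_int \<Delta>"
    unfolding pk_def poly_R0_quotient[OF assms(2)] at_node \<Delta>_def using assms(1) by simp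
  have abs_\<Delta>: "\<bar>\<Delta>\<bar> = int F"
    unfolding \<Delta>_def F_def using abs_prod_node_differences[OF assms(2)] by simp
  have sum: "nat (int n+k) + nat (int n-k) = 2*n" using assms(2) by auto
  have "int F dvd fact (2*n)"
    unfolding F_def using fact_fact_dvd_fact[of "nat (int n+k)" "nat (int n-k)"] sum
    by (metis of_nat_dvd_iff of_nat_fact)
  then have "\<Delta> dvd P" using divisible abs_\<Delta> by (metis abs_dvd_iff dvd_trans)
  then obtain m where "P = \<Delta> * m" by blast
  moreover have "\<Delta> \<noteq> 0" using abs_\<Delta> F_def by auto
  ultimately show "pk d n q k \<in> \<int>" unfolding pk_eq by simp
  have F_ge: "(fact n)^2 \<le> real F"
    unfolding F_def using fact_square_le_fact_mult[OF sum] by (metis of_nat_fact of_nat_le_iff of_nat_power)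
  have fact_pos: "(0::real) < (fact n)^2" by simp
  with F_ge have F_pos: "0 < real F" by linarith
  have "\<bar>pk d n q k\<bar> = of_int \<bar>P\<bar> / real F"
    unfolding pk_eq abs_divide using abs_\<Delta> by (metis of_int_abs of_int_of_nat_eq)
  also have "\<dots> \<le> of_int B / real F" using bound F_pos by (simp add: divide_right_mono)
  also have "\<dots> \<le> of_int B / (fact n)^2"
    by (rule divide_left_mono[OF F_ge]) (use bound mult_pos_pos[OF F_pos fact_pos] in auto)
  finally show "\<bar>pk d n q k\<bar> \<le> of_int B / (fact n)^2" .
qed

lemma abs_node_le:
  fixes d n :: nat and k :: int
  assumes "k \<in> {-int n..int n}"
  shows "\<bar>int d * k\<bar> \<le> int d * int n"
  using assms by (simp add: abs_mult abs_le_iff mult_left_mono)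

lemma degree_smult_prod_monic_linear:
  fixes c :: "'a::comm_ring_1" and I :: "'b set"
  assumes "finite I"
  shows "degree (smult c (\<Prod>l\<in>I. [:f l, 1:])) \<le> card I"
proof -
  have "degree (\<Prod>l\<in>I. [:f l, 1:]) \<le> (\<Sum>l\<in>I. (degree \<circ> (\<lambda>l. [:f l, 1:])) l)"
    by (rule degree_prod_sum_le[OF assms])
  then show ?thesis using degree_smult_le order_trans by fastforce
qed

(* Case (i) for a general block (a, a+2n] with a >= d n: the numerator is
   prod (d k - l) = prod (l - d k), the sign (-1)^(2n) being trivial. *)
lemma falling_block_case:
  fixes d n :: nat and a :: int
  assumes "d > 0" "int d * int n \<le> a"
  defines "q \<equiv> smult (real d ^ (2*n)) (\<Prod>l\<in>{a<..a+int (2*n)}. [:- of_int l, 1:])"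
  shows "degree q \<le> 2*n \<and> (\<forall>k\<in>{-int n..int n}. pk d n q k \<in> \<int> \<and> \<bar>pk d n q k\<bar>
     \<le> (1 / (fact n)^2) * (\<Prod>l\<in>{a+int d*int n<..a+int d*int n+int (2*n)}. (of_int l :: real)))"
proof (rule conjI[OF _ ballI])
  show "degree q \<le> 2*n"
    unfolding q_def by (rule order_trans[OF degree_smult_prod_monic_linear]) simp_all
next
  fix k :: int assume k: "k \<in> {-int n..int n}"
  let ?I = "{a<..a+int (2*n)}" and ?m = "- (int d * k)"
  define P where "P = (\<Prod>l\<in>?I. l + ?m)"
  have "(\<Prod>l\<in>?I. int d * k - l) = (\<Prod>l\<in>?I. (-1) * (l + ?m))"
    by (rule prod.cong) auto
  also have "\<dots> = (-1) ^ card ?I * P" unfolding P_def by (simp only: prod.distrib prod_constant)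
  also have "card ?I = 2*n" by simp
  finally have sign: "(\<Prod>l\<in>?I. int d * k - l) = P" by simp
  have "poly q (of_nat d * of_int k) = real d ^ (2*n) * of_int (\<Prod>l\<in>?I. int d * k - l)"
    unfolding q_def by (simp add: poly_prod)
  then have at_node: "poly q (of_nat d * of_int k) = real d ^ (2*n) * of_int P"
    unfolding sign .
  have "\<bar>?m\<bar> \<le> int d * int n" using abs_node_le[OF k] by simp
  note consecutive = shifted_consecutive_product[OF this assms(2), of "2*n", folded P_def]
  show "pk d n q k \<in> \<int> \<and> \<bar>pk d n q k\<bar>
      \<le> (1 / (fact n)^2) * (\<Prod>l\<in>{a+int d*int n<..a+int d*int n+int (2*n)}. (of_int l :: real))"
    using pk_integral_bound[OF assms(1) k at_node consecutive] by simp
qed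

lemma rising_block_case:
  fixes d n :: nat and a :: int
  assumes "d > 0" "int d * int n \<le> a"
  defines "q \<equiv> smult (real d ^ (2*n)) (\<Prod>l\<in>{a<..a+int (2*n)}. [:of_int l, 1:])"
  shows "degree q \<le> 2*n \<and> (\<forall>k\<in>{-int n..int n}. pk d n q k \<in> \<int> \<and> \<bar>pk d n q k\<bar>
     \<le> (1 / (fact n)^2) * (\<Prod>l\<in>{a+int d*int n<..a+int d*int n+int (2*n)}. (of_int l :: real)))"
proof (rule conjI[OF _ ballI])
  show "degree q \<le> 2*n"
    unfolding q_def by (rule order_trans[OF degree_smult_prod_monic_linear]) simp_all
next
  fix k :: int assume k: "k \<in> {-int n..int n}"
  define P where "P = (\<Prod>l\<in>{a<..a+int (2*n)}. l + int d * k)"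
  have at_node: "poly q (of_nat d * of_int k) = real d ^ (2*n) * of_int P"
    unfolding q_def P_def by (simp add: poly_prod add.commute)
  note consecutive = shifted_consecutive_product[OF abs_node_le[OF k] assms(2), of "2*n", folded P_def]
  show "pk d n q k \<in> \<int> \<and> \<bar>pk d n q k\<bar>
      \<le> (1 / (fact n)^2) * (\<Prod>l\<in>{a+int d*int n<..a+int d*int n+int (2*n)}. (of_int l :: real))"
    using pk_integral_bound[OF assms(1) k at_node consecutive] by simp
qed

lemma pk_constant:
  fixes d n :: nat and k :: int
  assumes "d > 0" "k \<in> {-int n..int n}"
  shows "pk d n [: real d ^ (2*n) * fact (2*n) :] k \<in> \<int>
    \<and> \<bar>pk d n [: real d ^ (2*n) * fact (2*n) :] k\<bar> \<le> fact (2*n) / (fact n)^2"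
  using pk_integral_bound[OF assms, of _ "fact (2*n)" "fact (2*n)"] by simp

(* The i-th blocks of the theorem: a = (d + 2(i-1)) n, so the block of q is (a, a+2n]
   and the block of the bound C is (a + d n, a + d n + 2n]. *)
lemma block_endpoints:
  fixes d n i :: nat
  shows "(int d + 2*(int i - 1)) * int n + int (2*n) = (int d + 2 * int i) * int n"
    and "(int d + 2*(int i - 1)) * int n + int d * int n = (2 * int d + 2*(int i - 1)) * int n"
    and "(2 * int d + 2*(int i - 1)) * int n + int (2*n) = (2 * int d + 2 * int i) * int n"
  by (simp_all add: algebra_simps)

lemma block_start:
  fixes d n i :: nat
  assumes "i \<ge> 1"
  shows "int d * int n \<le> (int d + 2*(int i - 1)) * int n"
  using assms by (simp add: mult_right_mono)

theorem lemma3p2: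
  fixes d b n :: nat
  assumes "d > 0" and "b > 0" and "n > 0"
  shows
   "(\<forall>i\<in>{1..b}.
      let q = smult (real d ^ (2*n))
                (\<Prod>l\<in>{(int d + 2*(int i - 1)) * int n <.. (int d + 2 * int i) * int n}. [:- of_int l, 1:]);
          C = (1 / (fact n)^2) * (\<Prod>l\<in>{(2 * int d + 2*(int i - 1)) * int n <.. (2 * int d + 2 * int i) * int n}. (of_int l :: real))
      in degree q \<le> 2*n \<and> (\<forall>k\<in>{-int n..int n}. pk d n q k \<in> \<int> \<and> \<bar>pk d n q k\<bar> \<le> C))
  \<and> (\<forall>i\<in>{1..b}.
      let q = smult (real d ^ (2*n))
                (\<Prod>l\<in>{(int d + 2*(int i - 1)) * int n <.. (int d + 2 * int i) * int n}. [:of_int l, 1:]);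
          C = (1 / (fact n)^2) * (\<Prod>l\<in>{(2 * int d + 2*(int i - 1)) * int n <.. (2 * int d + 2 * int i) * int n}. (of_int l :: real))
      in degree q \<le> 2*n \<and> (\<forall>k\<in>{-int n..int n}. pk d n q k \<in> \<int> \<and> \<bar>pk d n q k\<bar> \<le> C))
  \<and> (let q = [: real d ^ (2*n) * fact (2*n) :];
          C = fact (2*n) / (fact n)^2
      in degree q \<le> 2*n \<and> (\<forall>k\<in>{-int n..int n}. pk d n q k \<in> \<int> \<and> \<bar>pk d n q k\<bar> \<le> C))"
  apply (intro conjI ballI)
  subgoal for i
    unfolding Let_def block_endpoints[where d=d and n=n and i=i, symmetric]
    by (rule falling_block_case[OF assms(1) block_start]) simp
  subgoal for i
    unfolding Let_def block_endpoints[where d=d and n=n and i=i, symmetric]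
    by (rule rising_block_case[OF assms(1) block_start]) simp
  subgoal
    unfolding Let_def using pk_constant[OF assms(1)] by simp
  done

end
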